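(* Let $X$ be a finite-dimensional real vector space and $\phi:X\to\mathbf{R}$ a strictly convex norm that is continuously differentiable on $X\setminus\{0\}$. Let $S=\partial\{z:\phi(z)\le1\}$, $\xi:X\setminus\{0\}\to S$, $\xi(x)=x/\phi(x)$, and $\pi(\eta)=\mathrm{D}\xi(\eta)\in\mathrm{Hom}(X,X)$ for $\eta\in S$. Let $0<\varepsilon<1$ and $$R=\sup\Bigl(\mathbf{R}\cap\bigl\{r:0<r<1,\ \text{and for all }\eta,\zeta\in S,\ \phi(\eta-\zeta)\le r\Rightarrow\|\pi(\eta)-\pi(\zeta)\|_\phi\le1-\varepsilon\bigr\}\Bigr).$$ Then for every $\eta\in S$ the map $\pi(\eta)$ restricted to $S\cap\{z:\phi(z-\eta)\le R\}$ is injective.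
   Context: A norm $\phi$ is strictly convex if $\phi(a+b)=\phi(a)+\phi(b)$ implies $\phi(b)a=\phi(a)b$. For $L\in\mathrm{Hom}(X,X)$, $\|L\|_\phi=\sup\{\phi(Lx):\phi(x)\le1\}$. *)

theory Defs
  imports "HOL-Analysis.Analysis"
begin

definition is_norm_on :: "('a::real_vector \<Rightarrow> real) \<Rightarrow> bool" where
  "is_norm_on \<phi> \<longleftrightarrow>
     (\<forall>x. 0 \<le> \<phi> x) \<and> (\<forall>x. \<phi> x = 0 \<longleftrightarrow> x = 0) \<and>
     (\<forall>c x. \<phi> (c *\<^sub>R x) = \<bar>c\<bar> * \<phi> x) \<and>
     (\<forall>x y. \<phi> (x + y) \<le> \<phi> x + \<phi> y)"

definition strictly_convex_norm :: "('a::real_vector \<Rightarrow> real) \<Rightarrow> bool" where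
  "strictly_convex_norm \<phi> \<longleftrightarrow>
     (\<forall>a b. \<phi> (a + b) = \<phi> a + \<phi> b \<longrightarrow> \<phi> b *\<^sub>R a = \<phi> a *\<^sub>R b)"

definition C1_off_zero :: "('a::euclidean_space \<Rightarrow> real) \<Rightarrow> bool" where
  "C1_off_zero \<phi> \<longleftrightarrow>
     (\<exists>D :: 'a \<Rightarrow> 'a \<Rightarrow>\<^sub>L real.
        (\<forall>x. x \<noteq> 0 \<longrightarrow> (\<phi> has_derivative blinfun_apply (D x)) (at x)) \<and>
        continuous_on (- {0}) D)"

definition unit_sphere_phi :: "('a::euclidean_space \<Rightarrow> real) \<Rightarrow> 'a set" where
  "unit_sphere_phi \<phi> = frontier {z. \<phi> z \<le> 1}"

definition xi_map :: "('a::real_vector \<Rightarrow> real) \<Rightarrow> 'a \<Rightarrow> 'a" where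
  "xi_map \<phi> x = x /\<^sub>R \<phi> x"

definition pi_map :: "('a::euclidean_space \<Rightarrow> real) \<Rightarrow> 'a \<Rightarrow> 'a \<Rightarrow> 'a" where
  "pi_map \<phi> \<eta> = frechet_derivative (xi_map \<phi>) (at \<eta>)"

definition opnorm_phi :: "('a::real_vector \<Rightarrow> real) \<Rightarrow> ('a \<Rightarrow> 'a) \<Rightarrow> real" where
  "opnorm_phi \<phi> L = Sup ((\<lambda>x. \<phi> (L x)) ` {x. \<phi> x \<le> 1})"

definition R_const :: "('a::euclidean_space \<Rightarrow> real) \<Rightarrow> real \<Rightarrow> real" where
  "R_const \<phi> \<epsilon> = Sup {r. 0 < r \<and> r < 1 \<and>
      (\<forall>\<eta>\<in>unit_sphere_phi \<phi>. \<forall>\<zeta>\<in>unit_sphere_phi \<phi>.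
         \<phi> (\<eta> - \<zeta>) \<le> r \<longrightarrow>
         opnorm_phi \<phi> (\<lambda>x. pi_map \<phi> \<eta> x - pi_map \<phi> \<zeta> x) \<le> 1 - \<epsilon>)}"

end

theory Submission
  imports Defs
begin

text \<open>For \<open>\<eta>\<close> on the unit sphere, \<open>\<pi>(\<eta>) v = v - D\<phi>(\<eta>) v \<cdot> \<eta>\<close>, so
  \<open>\<pi>(\<eta>) z\<^sub>1 = \<pi>(\<eta>) z\<^sub>2\<close> forces \<open>z\<^sub>1 - z\<^sub>2 = t \<eta>\<close>. The derivative \<open>D\<phi>(z)\<close> at a
  unit vector \<open>z\<close> is a supporting functional: it is bounded by \<open>\<phi>\<close> and equals 1 at \<open>z\<close>.
  Applying \<open>D\<phi>(z\<^sub>1)\<close> and \<open>D\<phi>(z\<^sub>2)\<close> to \<open>z\<^sub>1 - z\<^sub>2\<close> gives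
  \<open>t D\<phi>(z\<^sub>1) \<eta> \<ge> 0 \<ge> t D\<phi>(z\<^sub>2) \<eta>\<close>, and strict convexity makes \<open>D\<phi>(z) \<eta> > 0\<close>
  whenever \<open>\<phi>(z - \<eta>) \<le> 1\<close>; hence \<open>t = 0\<close>. So \<open>\<pi>(\<eta>)\<close> is injective on the part of the
  sphere within \<open>\<phi>\<close>-distance 1 of \<open>\<eta>\<close>, and \<open>R \<le> 1\<close> as soon as the set defining \<open>R\<close> is
  non-empty (the supremum of the empty set of reals is unspecified), which follows from the uniform continuity of \<open>D\<phi>\<close> on the compact sphere.\<close>

lemma
  assumes "is_norm_on \<phi>"
  shows is_norm_on_nonneg: "0 \<le> \<phi> x"
    and is_norm_on_eq_0_iff: "\<phi> x = 0 \<longleftrightarrow> x = 0"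
    and is_norm_on_scaleR: "\<phi> (c *\<^sub>R x) = \<bar>c\<bar> * \<phi> x"
    and is_norm_on_triangle: "\<phi> (x + y) \<le> \<phi> x + \<phi> y"
  using assms unfolding is_norm_on_def by blast+

lemma is_norm_on_zero: "is_norm_on \<phi> \<Longrightarrow> \<phi> 0 = 0"
  by (simp add: is_norm_on_eq_0_iff)

lemma is_norm_on_minus: "is_norm_on \<phi> \<Longrightarrow> \<phi> (- x) = \<phi> x"
  using is_norm_on_scaleR[of \<phi> "-1" x] by simp

lemma is_norm_on_commute: "is_norm_on \<phi> \<Longrightarrow> \<phi> (x - y) = \<phi> (y - x)"
  using is_norm_on_minus[of \<phi> "x - y"] by simp

lemma convex_on_is_norm_on:
  assumes N: "is_norm_on \<phi>"
  shows "convex_on UNIV \<phi>"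
proof (rule convex_onI)
  fix t :: real and x y assume "0 < t" "t < 1"
  then show "\<phi> ((1 - t) *\<^sub>R x + t *\<^sub>R y) \<le> (1 - t) * \<phi> x + t * \<phi> y"
    using is_norm_on_triangle[OF N, of "(1 - t) *\<^sub>R x" "t *\<^sub>R y"] by (simp add: is_norm_on_scaleR[OF N])
qed simp

lemma continuous_on_is_norm_on:
  fixes \<phi> :: "'a::euclidean_space \<Rightarrow> real"
  shows "is_norm_on \<phi> \<Longrightarrow> continuous_on UNIV \<phi>"
  by (rule convex_on_continuous[OF open_UNIV convex_on_is_norm_on])

lemma is_norm_on_norm_le:
  fixes \<phi> :: "'a::euclidean_space \<Rightarrow> real"
  assumes N: "is_norm_on \<phi>"
  shows "\<exists>K>0. \<forall>x. norm x \<le> K * \<phi> x"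
proof -
  have "(SOME b. b \<in> Basis) \<in> sphere (0::'a) 1"
    by (simp add: SOME_Basis)
  then obtain u where u: "u \<in> sphere (0::'a) 1" and min: "\<And>y. y \<in> sphere 0 1 \<Longrightarrow> \<phi> u \<le> \<phi> y"
    using continuous_attains_inf[OF compact_sphere _ continuous_on_subset[OF continuous_on_is_norm_on[OF N]]]
    by blast
  then have pos: "\<phi> u > 0"
    using is_norm_on_nonneg[OF N, of u] is_norm_on_eq_0_iff[OF N, of u] by force
  have "norm x \<le> 1 / \<phi> u * \<phi> x" for x
  proof (cases "x = 0")
    case False
    then have "\<phi> u \<le> \<phi> ((1 / norm x) *\<^sub>R x)" by (intro min) simp
    then show ?thesis
      using False pos by (simp add: is_norm_on_scaleR[OF N] field_simps)
  qed (simp add: is_norm_on_zero[OF N])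
  then show ?thesis using pos by (intro exI[of _ "1 / \<phi> u"]) simp
qed

lemma unit_sphere_phi_eq_1:
  fixes \<phi> :: "'a::euclidean_space \<Rightarrow> real"
  assumes N: "is_norm_on \<phi>" and z: "z \<in> unit_sphere_phi \<phi>"
  shows "\<phi> z = 1"
proof -
  have "closed {z. \<phi> z \<le> 1}"
    by (rule closed_Collect_le[OF continuous_on_is_norm_on[OF N] continuous_on_const])
  moreover have "{z. \<phi> z < 1} \<subseteq> interior {z. \<phi> z \<le> 1}"
    by (rule interior_maximal)
      (auto intro: open_Collect_less[OF continuous_on_is_norm_on[OF N] continuous_on_const])
  ultimately show ?thesis
    using z unfolding unit_sphere_phi_def frontier_def by force
qed

lemma compact_unit_sphere_phi:
  fixes \<phi> :: "'a::euclidean_space \<Rightarrow> real"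
  assumes N: "is_norm_on \<phi>"
  shows "compact (unit_sphere_phi \<phi>)"
proof -
  obtain K where K: "\<And>x. norm x \<le> K * \<phi> x" using is_norm_on_norm_le[OF N] by blast
  have "unit_sphere_phi \<phi> \<subseteq> cball 0 K"
    using K unit_sphere_phi_eq_1[OF N] by (metis mem_cball_0 mult.right_neutral subsetI)
  then show ?thesis
    unfolding compact_eq_bounded_closed unit_sphere_phi_def
    by (metis bounded_cball bounded_subset frontier_closed)
qed

lemma has_derivative_difference_quotient_at_right:
  fixes \<phi> :: "'a::real_normed_vector \<Rightarrow> real"
  assumes d: "(\<phi> has_derivative f) (at x)"
  shows "((\<lambda>h. (\<phi> (x + h *\<^sub>R v) - \<phi> x) / h) \<longlongrightarrow> f v) (at_right 0)"
proof -
  have "((\<lambda>t. x + t *\<^sub>R v) has_derivative (\<lambda>t. t *\<^sub>R v)) (at 0)"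
    by (auto intro!: derivative_eq_intros)
  moreover have "(\<phi> has_derivative f) (at (x + 0 *\<^sub>R v))" using d by simp
  ultimately have "((\<lambda>t. \<phi> (x + t *\<^sub>R v)) has_derivative (\<lambda>t. f (t *\<^sub>R v))) (at 0)"
    by (rule has_derivative_compose)
  moreover have "(\<lambda>t. f (t *\<^sub>R v)) = (*) (f v)"
    using linear_scale[OF has_derivative_linear[OF d]] by (auto simp: mult.commute)
  ultimately have "((\<lambda>t. \<phi> (x + t *\<^sub>R v)) has_real_derivative f v) (at 0)"
    by (simp add: has_field_derivative_def)
  then show ?thesis
    unfolding DERIV_def by (auto intro: tendsto_mono[OF at_le])
qed

lemma is_norm_on_derivative_le:
  fixes \<phi> :: "'a::real_normed_vector \<Rightarrow> real"
  assumes N: "is_norm_on \<phi>" and d: "(\<phi> has_derivative f) (at x)"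
  shows "f v \<le> \<phi> v"
proof (rule tendsto_upperbound[OF has_derivative_difference_quotient_at_right[OF d]])
  show "\<forall>\<^sub>F h in at_right 0. (\<phi> (x + h *\<^sub>R v) - \<phi> x) / h \<le> \<phi> v"
    using eventually_at_right_less
  proof (rule eventually_mono)
    fix h :: real assume "0 < h"
    then show "(\<phi> (x + h *\<^sub>R v) - \<phi> x) / h \<le> \<phi> v"
      using is_norm_on_triangle[OF N, of x "h *\<^sub>R v"]
      by (simp add: is_norm_on_scaleR[OF N] field_simps)
  qed
qed simp

lemma is_norm_on_abs_derivative_le:
  fixes \<phi> :: "'a::real_normed_vector \<Rightarrow> real"
  assumes N: "is_norm_on \<phi>" and d: "(\<phi> has_derivative f) (at x)"
  shows "\<bar>f v\<bar> \<le> \<phi> v"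
  using is_norm_on_derivative_le[OF N d, of v] is_norm_on_derivative_le[OF N d, of "- v"]
    linear_neg[OF has_derivative_linear[OF d]] is_norm_on_minus[OF N]
  by auto

lemma is_norm_on_derivative_self:
  fixes \<phi> :: "'a::real_normed_vector \<Rightarrow> real"
  assumes N: "is_norm_on \<phi>" and d: "(\<phi> has_derivative f) (at x)"
  shows "f x = \<phi> x"
proof (rule tendsto_unique[OF _ has_derivative_difference_quotient_at_right[OF d, of x]])
  have "\<phi> (x + h *\<^sub>R x) = (1 + h) * \<phi> x" if "0 < h" for h
    using is_norm_on_scaleR[OF N, of "1 + h" x] that by (simp add: algebra_simps)
  then have "\<forall>\<^sub>F h in at_right 0. \<phi> x = (\<phi> (x + h *\<^sub>R x) - \<phi> x) / h"
    by (auto intro: eventually_mono[OF eventually_at_right_less] simp: field_simps)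
  then show "((\<lambda>h. (\<phi> (x + h *\<^sub>R x) - \<phi> x) / h) \<longlongrightarrow> \<phi> x) (at_right 0)"
    by (rule Lim_transform_eventually[OF tendsto_const])
qed simp

text \<open>If \<open>f \<eta> \<le> 0\<close>, the functional \<open>f\<close> would attain \<open>\<phi>\<close> at \<open>\<zeta> - \<eta>\<close> and at \<open>\<zeta>\<close>, hence
  also at their sum, i.e. equality would hold in the triangle inequality for \<open>\<zeta>\<close> and \<open>\<zeta> - \<eta>\<close>.\<close>

lemma is_norm_on_derivative_pos:
  fixes \<phi> :: "'a::real_normed_vector \<Rightarrow> real"
  assumes N: "is_norm_on \<phi>" and SC: "strictly_convex_norm \<phi>"
    and d: "(\<phi> has_derivative f) (at \<zeta>)" and \<zeta>: "\<phi> \<zeta> = 1" and \<eta>: "\<phi> \<eta> = 1"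
    and close: "\<phi> (\<zeta> - \<eta>) \<le> 1"
  shows "f \<eta> > 0"
proof (rule ccontr)
  assume "\<not> f \<eta> > 0"
  have lin: "linear f" by (rule has_derivative_linear[OF d])
  have f\<zeta>: "f \<zeta> = 1" using is_norm_on_derivative_self[OF N d] \<zeta> by simp
  have "f (\<zeta> - \<eta>) \<le> \<phi> (\<zeta> - \<eta>)" by (rule is_norm_on_derivative_le[OF N d])
  with \<open>\<not> f \<eta> > 0\<close> close have f\<eta>: "f \<eta> = 0" and dist: "\<phi> (\<zeta> - \<eta>) = 1"
    using f\<zeta> linear_diff[OF lin] by auto
  have "f (\<zeta> + (\<zeta> - \<eta>)) = 2" using f\<zeta> f\<eta> linear_add[OF lin] linear_diff[OF lin] by simp
  moreover have "f (\<zeta> + (\<zeta> - \<eta>)) \<le> \<phi> (\<zeta> + (\<zeta> - \<eta>))" by (rule is_norm_on_derivative_le[OF N d])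
  moreover have "\<phi> (\<zeta> + (\<zeta> - \<eta>)) \<le> \<phi> \<zeta> + \<phi> (\<zeta> - \<eta>)" by (rule is_norm_on_triangle[OF N])
  ultimately have "\<phi> (\<zeta> + (\<zeta> - \<eta>)) = \<phi> \<zeta> + \<phi> (\<zeta> - \<eta>)" using \<zeta> dist by linarith
  then have "\<phi> (\<zeta> - \<eta>) *\<^sub>R \<zeta> = \<phi> \<zeta> *\<^sub>R (\<zeta> - \<eta>)"
    using SC unfolding strictly_convex_norm_def by blast
  then have "\<eta> = 0" using \<zeta> dist by simp
  then show False using \<eta> is_norm_on_zero[OF N] by simp
qed

lemma pi_map_eq:
  fixes \<phi> :: "'a::euclidean_space \<Rightarrow> real"
  assumes d: "(\<phi> has_derivative f) (at x)" and x: "\<phi> x = 1"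
  shows "pi_map \<phi> x = (\<lambda>v. v - f v *\<^sub>R x)"
proof -
  have "(xi_map \<phi> has_derivative
      (\<lambda>v. inverse (\<phi> x) *\<^sub>R v - (inverse (\<phi> x) * f v * inverse (\<phi> x)) *\<^sub>R x)) (at x)"
    unfolding xi_map_def divide_inverse_commute
    using x d by (auto intro!: derivative_eq_intros simp: scaleR_conv_of_real)
  then have "(xi_map \<phi> has_derivative (\<lambda>v. v - f v *\<^sub>R x)) (at x)" using x by simp
  then show ?thesis unfolding pi_map_def by (rule frechet_derivative_at[symmetric])
qed

lemma inj_on_pi_map:
  fixes \<phi> :: "'a::euclidean_space \<Rightarrow> real"
  assumes N: "is_norm_on \<phi>" and SC: "strictly_convex_norm \<phi>"
    and D: "\<And>x. x \<noteq> 0 \<Longrightarrow> (\<phi> has_derivative D x) (at x)" and \<eta>: "\<phi> \<eta> = 1"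
  shows "inj_on (pi_map \<phi> \<eta>) {z. \<phi> z = 1 \<and> \<phi> (z - \<eta>) \<le> 1}"
proof (rule inj_onI)
  have D1: "(\<phi> has_derivative D z) (at z)" if "\<phi> z = 1" for z
    using that is_norm_on_zero[OF N] by (intro D) auto
  fix z\<^sub>1 z\<^sub>2 assume z\<^sub>1: "z\<^sub>1 \<in> {z. \<phi> z = 1 \<and> \<phi> (z - \<eta>) \<le> 1}"
    and z\<^sub>2: "z\<^sub>2 \<in> {z. \<phi> z = 1 \<and> \<phi> (z - \<eta>) \<le> 1}"
    and "pi_map \<phi> \<eta> z\<^sub>1 = pi_map \<phi> \<eta> z\<^sub>2"
  define t where "t = D \<eta> z\<^sub>1 - D \<eta> z\<^sub>2"
  have diff: "z\<^sub>1 - z\<^sub>2 = t *\<^sub>R \<eta>"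
    using \<open>pi_map \<phi> \<eta> z\<^sub>1 = pi_map \<phi> \<eta> z\<^sub>2\<close> unfolding pi_map_eq[OF D1[OF \<eta>] \<eta>] t_def
    by (simp add: algebra_simps)
  have apply_diff: "t * D z \<eta> = D z z\<^sub>1 - D z z\<^sub>2" if "\<phi> z = 1" for z
    using has_derivative_linear[OF D1[OF that]] diff
    by (metis linear_diff linear_scale real_scaleR_def)
  have "t * D z\<^sub>1 \<eta> \<ge> 0"
    using apply_diff[of z\<^sub>1] z\<^sub>1 z\<^sub>2 is_norm_on_derivative_self[OF N D1, of z\<^sub>1]
      is_norm_on_derivative_le[OF N D1, of z\<^sub>1 z\<^sub>2] by simp
  moreover have "t * D z\<^sub>2 \<eta> \<le> 0"
    using apply_diff[of z\<^sub>2] z\<^sub>1 z\<^sub>2 is_norm_on_derivative_self[OF N D1, of z\<^sub>2]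
      is_norm_on_derivative_le[OF N D1, of z\<^sub>2 z\<^sub>1] by simp
  moreover have "D z\<^sub>1 \<eta> > 0" "D z\<^sub>2 \<eta> > 0"
    using z\<^sub>1 z\<^sub>2 by (auto intro: is_norm_on_derivative_pos[OF N SC D1 _ \<eta>])
  ultimately have "t = 0" by (simp add: zero_le_mult_iff mult_le_0_iff)
  then show "z\<^sub>1 = z\<^sub>2" using diff by simp
qed

lemma opnorm_phi_le:
  assumes N: "is_norm_on \<phi>" and bound: "\<And>x. \<phi> x \<le> 1 \<Longrightarrow> \<phi> (L x) \<le> c"
  shows "opnorm_phi \<phi> L \<le> c"
  unfolding opnorm_phi_def
proof (rule cSup_least)
  have "0 \<in> {x. \<phi> x \<le> 1}" using is_norm_on_zero[OF N] by simp
  then show "(\<lambda>x. \<phi> (L x)) ` {x. \<phi> x \<le> 1} \<noteq> {}" by blast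
qed (use bound in auto)

lemma pi_map_diff_le:
  fixes \<phi> :: "'a::euclidean_space \<Rightarrow> real"
  assumes N: "is_norm_on \<phi>"
    and d\<eta>: "(\<phi> has_derivative D\<eta>) (at \<eta>)" and \<eta>: "\<phi> \<eta> = 1"
    and d\<zeta>: "(\<phi> has_derivative D\<zeta>) (at \<zeta>)" and \<zeta>: "\<phi> \<zeta> = 1"
  shows "\<phi> (pi_map \<phi> \<eta> x - pi_map \<phi> \<zeta> x) \<le> \<bar>D\<zeta> x - D\<eta> x\<bar> + \<phi> x * \<phi> (\<eta> - \<zeta>)"
proof -
  have "pi_map \<phi> \<eta> x - pi_map \<phi> \<zeta> x = (D\<zeta> x - D\<eta> x) *\<^sub>R \<zeta> + D\<eta> x *\<^sub>R (\<zeta> - \<eta>)"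
    unfolding pi_map_eq[OF d\<eta> \<eta>] pi_map_eq[OF d\<zeta> \<zeta>] by (simp add: algebra_simps)
  then have "\<phi> (pi_map \<phi> \<eta> x - pi_map \<phi> \<zeta> x)
      \<le> \<phi> ((D\<zeta> x - D\<eta> x) *\<^sub>R \<zeta>) + \<phi> (D\<eta> x *\<^sub>R (\<zeta> - \<eta>))"
    by (simp add: is_norm_on_triangle[OF N])
  also have "\<dots> = \<bar>D\<zeta> x - D\<eta> x\<bar> + \<bar>D\<eta> x\<bar> * \<phi> (\<eta> - \<zeta>)"
    using \<zeta> by (simp add: is_norm_on_scaleR[OF N] is_norm_on_commute[OF N, of \<zeta>])
  also have "\<dots> \<le> \<bar>D\<zeta> x - D\<eta> x\<bar> + \<phi> x * \<phi> (\<eta> - \<zeta>)"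
    using is_norm_on_abs_derivative_le[OF N d\<eta>] is_norm_on_nonneg[OF N]
    by (simp add: mult_right_mono)
  finally show ?thesis .
qed

lemma pi_map_uniform_continuity_radius:
  fixes \<phi> :: "'a::euclidean_space \<Rightarrow> real"
  assumes N: "is_norm_on \<phi>" and C1: "C1_off_zero \<phi>" and "0 < \<epsilon>" "\<epsilon> < 1"
  shows "\<exists>r. 0 < r \<and> r < 1 \<and>
      (\<forall>\<eta>\<in>unit_sphere_phi \<phi>. \<forall>\<zeta>\<in>unit_sphere_phi \<phi>.
         \<phi> (\<eta> - \<zeta>) \<le> r \<longrightarrow>
         opnorm_phi \<phi> (\<lambda>x. pi_map \<phi> \<eta> x - pi_map \<phi> \<zeta> x) \<le> 1 - \<epsilon>)"
proof -
  obtain D :: "'a \<Rightarrow> 'a \<Rightarrow>\<^sub>L real"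
    where D: "\<And>x. x \<noteq> 0 \<Longrightarrow> (\<phi> has_derivative D x) (at x)" and cont: "continuous_on (- {0}) D"
    using C1 unfolding C1_off_zero_def by blast
  obtain K where "K > 0" and K: "\<And>x. norm x \<le> K * \<phi> x" using is_norm_on_norm_le[OF N] by blast
  define S where "S = unit_sphere_phi \<phi>"
  have S: "\<phi> z = 1" "z \<noteq> 0" if "z \<in> S" for z
    using that unit_sphere_phi_eq_1[OF N] is_norm_on_zero[OF N] unfolding S_def by force+
  then have "uniformly_continuous_on S D"
    using compact_uniformly_continuous[OF continuous_on_subset[OF cont] compact_unit_sphere_phi[OF N]]
    unfolding S_def by blast
  moreover have tolerance_pos: "(1 - \<epsilon>) / (2 * K) > 0" using \<open>K > 0\<close> \<open>\<epsilon> < 1\<close> by simp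
  ultimately obtain \<delta> where "\<delta> > 0" and \<delta>:
    "\<And>\<eta> \<zeta>. \<eta> \<in> S \<Longrightarrow> \<zeta> \<in> S \<Longrightarrow> dist \<zeta> \<eta> < \<delta> \<Longrightarrow> norm (D \<zeta> - D \<eta>) < (1 - \<epsilon>) / (2 * K)"
    unfolding uniformly_continuous_on_def dist_norm by metis
  define r where "r = min (\<delta> / (2 * K)) ((1 - \<epsilon>) / 2)"
  have "0 < r" "r < 1" using \<open>\<delta> > 0\<close> \<open>K > 0\<close> \<open>0 < \<epsilon>\<close> \<open>\<epsilon> < 1\<close> by (auto simp: r_def min_less_iff_disj)
  moreover have "opnorm_phi \<phi> (\<lambda>x. pi_map \<phi> \<eta> x - pi_map \<phi> \<zeta> x) \<le> 1 - \<epsilon>"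
    if "\<eta> \<in> S" "\<zeta> \<in> S" "\<phi> (\<eta> - \<zeta>) \<le> r" for \<eta> \<zeta>
  proof (rule opnorm_phi_le[OF N])
    have "dist \<zeta> \<eta> \<le> K * \<phi> (\<eta> - \<zeta>)"
      using K[of "\<zeta> - \<eta>"] by (simp add: dist_norm is_norm_on_commute[OF N, of \<zeta>])
    also have "\<dots> \<le> K * (\<delta> / (2 * K))"
      using that(3) \<open>K > 0\<close> by (intro mult_left_mono) (auto simp: r_def)
    also have "\<dots> < \<delta>" using \<open>K > 0\<close> \<open>\<delta> > 0\<close> by simp
    finally have D_close: "norm (D \<zeta> - D \<eta>) < (1 - \<epsilon>) / (2 * K)" using \<delta> that by blast
    fix x assume "\<phi> x \<le> 1"
    then have "norm x \<le> K"
      using order_trans[OF K mult_left_mono[of "\<phi> x" 1 K]] \<open>K > 0\<close> by simp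
    have "\<bar>D \<zeta> x - D \<eta> x\<bar> \<le> norm (D \<zeta> - D \<eta>) * norm x"
      by (metis blinfun.diff_left norm_blinfun real_norm_def)
    also have "\<dots> \<le> (1 - \<epsilon>) / (2 * K) * K"
      using D_close \<open>norm x \<le> K\<close> tolerance_pos by (intro mult_mono) auto
    finally have D_diff: "\<bar>D \<zeta> x - D \<eta> x\<bar> \<le> (1 - \<epsilon>) / 2" using \<open>K > 0\<close> by simp
    have "\<phi> (pi_map \<phi> \<eta> x - pi_map \<phi> \<zeta> x) \<le> \<bar>D \<zeta> x - D \<eta> x\<bar> + \<phi> x * \<phi> (\<eta> - \<zeta>)"
      using that(1,2) by (intro pi_map_diff_le[OF N D S(1) D S(1)] S(2))
    also have "\<dots> \<le> (1 - \<epsilon>) / 2 + 1 * ((1 - \<epsilon>) / 2)"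
      using D_diff \<open>\<phi> x \<le> 1\<close> that(3) is_norm_on_nonneg[OF N]
      by (intro add_mono mult_mono) (auto simp: r_def)
    finally show "\<phi> (pi_map \<phi> \<eta> x - pi_map \<phi> \<zeta> x) \<le> 1 - \<epsilon>" by simp
  qed
  ultimately show ?thesis unfolding S_def by blast
qed

lemma R_const_le_1:
  fixes \<phi> :: "'a::euclidean_space \<Rightarrow> real"
  assumes "is_norm_on \<phi>" "C1_off_zero \<phi>" "0 < \<epsilon>" "\<epsilon> < 1"
  shows "R_const \<phi> \<epsilon> \<le> 1"
  unfolding R_const_def
  using pi_map_uniform_continuity_radius[OF assms] by (intro cSup_least) auto

theorem lemma3p6:
  fixes \<phi> :: "'a::euclidean_space \<Rightarrow> real" and \<epsilon> :: real
  assumes "is_norm_on \<phi>"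
    and "strictly_convex_norm \<phi>"
    and "C1_off_zero \<phi>"
    and "0 < \<epsilon>" and "\<epsilon> < 1"
  shows "\<forall>\<eta>\<in>unit_sphere_phi \<phi>.
           inj_on (pi_map \<phi> \<eta>)
             (unit_sphere_phi \<phi> \<inter> {z. \<phi> (z - \<eta>) \<le> R_const \<phi> \<epsilon>})"
proof
  fix \<eta> assume \<eta>: "\<eta> \<in> unit_sphere_phi \<phi>"
  obtain D :: "'a \<Rightarrow> 'a \<Rightarrow>\<^sub>L real" where D: "\<And>x. x \<noteq> 0 \<Longrightarrow> (\<phi> has_derivative D x) (at x)"
    using assms(3) unfolding C1_off_zero_def by blast
  have "unit_sphere_phi \<phi> \<inter> {z. \<phi> (z - \<eta>) \<le> R_const \<phi> \<epsilon>} \<subseteq> {z. \<phi> z = 1 \<and> \<phi> (z - \<eta>) \<le> 1}"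
    using unit_sphere_phi_eq_1[OF assms(1)] R_const_le_1[OF assms(1,3-5)] by force
  then show "inj_on (pi_map \<phi> \<eta>) (unit_sphere_phi \<phi> \<inter> {z. \<phi> (z - \<eta>) \<le> R_const \<phi> \<epsilon>})"
    using inj_on_pi_map[OF assms(1,2) D unit_sphere_phi_eq_1[OF assms(1) \<eta>]] by (rule inj_on_subset[rotated])
qed

end
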